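(* In the $\ell^1$ linear social choice setting with $n$ voters, $m$ candidates and dimension $d$, the worst-case distortion of the plurality rule is $\mathrm{D}(f_{\mathrm{Plur}})=\Theta(\min(m,n)\cdot d)$.
   Context: Setting ($\ell^1$ linear social choice). Let $\Delta_d=\{x\in\mathbb{R}^d_{\ge 0}:\sum_i x^i=1\}$. An instance consists of $n$ voters and $m$ candidates, each a vector in $\Delta_d$, with every voter vector in $\mathrm{Cone}(C)$ (nonnegative linear combinations of the candidate vectors $C$). Utility: $u_v(c)=v^\top c$. Each voter reports a ranking of $C$ consistent with its utilities (ties broken arbitrarily). $\mathrm{UW}(c)=\sum_v u_v(c)$. The distortion of a rule $f$ on an instance is $\max_c\mathrm{UW}(c)/\mathrm{UW}(f)$ where $f$ is the candidate output; $\mathrm{D}(f)$ is the supremum over all instances with the given $n,m,d$, as a function of $n,m,d$. Plurality $f_{\mathrm{Plur}}$: output a candidate ranked first by the largest number of voters (ties broken arbitrarily). *)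

theory Defs
  imports "HOL-Library.Extended_Real"
begin

text \<open>Vectors in R^d are represented as functions nat => real; only the
coordinates k < d matter (the simplex condition forces the others to be 0).
Voters are indexed by i < n, candidates by j < m.\<close>

definition in_simplex :: "nat \<Rightarrow> (nat \<Rightarrow> real) \<Rightarrow> bool" where
  "in_simplex d x \<longleftrightarrow> (\<forall>k. d \<le> k \<longrightarrow> x k = 0) \<and> (\<forall>k<d. 0 \<le> x k) \<and> (\<Sum>k<d. x k) = 1"

definition in_cone :: "nat \<Rightarrow> nat \<Rightarrow> (nat \<Rightarrow> nat \<Rightarrow> real) \<Rightarrow> (nat \<Rightarrow> real) \<Rightarrow> bool" where
  "in_cone d m C v \<longleftrightarrow> (\<exists>lam :: nat \<Rightarrow> real. (\<forall>j<m. 0 \<le> lam j) \<and>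
       (\<forall>k<d. v k = (\<Sum>j<m. lam j * C j k)))"

definition util :: "nat \<Rightarrow> (nat \<Rightarrow> real) \<Rightarrow> (nat \<Rightarrow> real) \<Rightarrow> real" where
  "util d v c = (\<Sum>k<d. v k * c k)"

definition UW :: "nat \<Rightarrow> nat \<Rightarrow> (nat \<Rightarrow> nat \<Rightarrow> real) \<Rightarrow> (nat \<Rightarrow> real) \<Rightarrow> real" where
  "UW n d V c = (\<Sum>i<n. util d (V i) c)"

definition valid_instance ::
  "nat \<Rightarrow> nat \<Rightarrow> nat \<Rightarrow> (nat \<Rightarrow> nat \<Rightarrow> real) \<Rightarrow> (nat \<Rightarrow> nat \<Rightarrow> real) \<Rightarrow> bool" where
  "valid_instance n m d V C \<longleftrightarrow>
     (\<forall>i<n. in_simplex d (V i)) \<and> (\<forall>j<m. in_simplex d (C j)) \<and> (\<forall>i<n. in_cone d m C (V i))"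

definition consistent_ranking ::
  "nat \<Rightarrow> nat \<Rightarrow> (nat \<Rightarrow> nat \<Rightarrow> real) \<Rightarrow> (nat \<Rightarrow> real) \<Rightarrow> nat list \<Rightarrow> bool" where
  "consistent_ranking m d C v r \<longleftrightarrow> distinct r \<and> set r = {..<m} \<and>
     sorted_wrt (\<lambda>a b. util d v (C b) \<le> util d v (C a)) r"

definition plurality_winner :: "nat \<Rightarrow> nat \<Rightarrow> (nat \<Rightarrow> nat list) \<Rightarrow> nat \<Rightarrow> bool" where
  "plurality_winner n m R w \<longleftrightarrow> w < m \<and>
     (\<forall>j<m. card {i. i < n \<and> hd (R i) = j} \<le> card {i. i < n \<and> hd (R i) = w})"

definition distortion_of :: "nat \<Rightarrow> nat \<Rightarrow> nat \<Rightarrow> (nat \<Rightarrow> nat \<Rightarrow> real) \<Rightarrow> (nat \<Rightarrow> nat \<Rightarrow> real) \<Rightarrow> nat \<Rightarrow> real" where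
  "distortion_of n m d V C w = (MAX j\<in>{..<m}. UW n d V (C j)) / UW n d V (C w)"

definition D_plur :: "nat \<Rightarrow> nat \<Rightarrow> nat \<Rightarrow> ereal" where
  "D_plur n m d = (SUP x \<in> {(V, C, R, w). valid_instance n m d V C \<and>
        (\<forall>i<n. consistent_ranking m d C (V i) (R i)) \<and> plurality_winner n m R w}.
     ereal (case x of (V, C, R, w) \<Rightarrow> distortion_of n m d V C w))"

end

theory Submission
  imports Defs "HOL-Analysis.Convex"
begin

(*
  Upper bound: a voter v lies in the cone of the candidates, and as all vectors lie on the
  simplex the cone weights sum to 1. Hence v.v is a convex combination of the utilities v.c_j
  and so at most v's utility for its top candidate, while v.v >= 1/d by Cauchy-Schwarz. The
  plurality winner is top for K >= max(1, n/m) voters, so its welfare is at least K/d, whereas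
  no welfare exceeds n; the distortion is at most n d / K <= min(m,n) d.

  Lower bound: candidate 0 is uniform on the coordinates 1..d-1 and all other candidates equal
  e_0. The first g = ceil(n/m) voters sit at candidate 0 and the others at e_0; the latter are
  indifferent among candidates 1..m-1 and may split their first places into blocks of at most g,
  so candidate 0 can win plurality with welfare g/(d-1) while candidate 1 has welfare n - g.
  The ratio (n - g)(d - 1)/g is at least min(m,n) d / 16.
*)

lemma util_nonneg:
  assumes "in_simplex d v" "in_simplex d c"
  shows "0 \<le> util d v c"
  using assms unfolding util_def in_simplex_def by (auto intro!: sum_nonneg)

lemma util_le_one:
  assumes "in_simplex d v" "in_simplex d c"
  shows "util d v c \<le> 1"
proof -
  have "c k \<le> 1" if "k < d" for k
  proof -
    have "c k \<le> (\<Sum>k<d. c k)"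
      using assms(2) that by (intro member_le_sum) (auto simp: in_simplex_def)
    then show ?thesis using assms(2) by (simp add: in_simplex_def)
  qed
  then have "util d v c \<le> (\<Sum>k<d. v k * 1)"
    unfolding util_def
    by (intro sum_mono mult_left_mono) (use assms(1) in \<open>auto simp: in_simplex_def\<close>)
  then show ?thesis using assms(1) by (simp add: in_simplex_def)
qed

lemma util_self_ge_inverse_dim:
  assumes "0 < d" "in_simplex d v"
  shows "1 / real d \<le> util d v v"
proof -
  have "1 = (\<Sum>k<d. v k)\<^sup>2" using assms(2) by (simp add: in_simplex_def)
  also have "\<dots> \<le> (\<Sum>k<d. (v k)\<^sup>2) * real d"
    using sum_squared_le_sum_of_squares[of v "{..<d}"] by simp
  finally show ?thesis using assms(1) by (simp add: util_def power2_eq_square field_simps)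
qed

lemma cone_weights_sum_eq_one:
  assumes "in_simplex d v" "\<And>j. j < m \<Longrightarrow> in_simplex d (C j)"
    and "\<And>k. k < d \<Longrightarrow> v k = (\<Sum>j<m. lam j * C j k)"
  shows "(\<Sum>j<m. lam j) = 1"
proof -
  have "(\<Sum>j<m. lam j) = (\<Sum>j<m. lam j * (\<Sum>k<d. C j k))"
    using assms(2) by (simp add: in_simplex_def)
  also have "\<dots> = (\<Sum>k<d. \<Sum>j<m. lam j * C j k)"
    by (simp add: sum_distrib_left sum.swap[of _ "{..<m}"])
  also have "\<dots> = (\<Sum>k<d. v k)" by (simp add: assms(3))
  finally show ?thesis using assms(1) by (simp add: in_simplex_def)
qed

lemma util_self_le_top_candidate:
  assumes "in_simplex d v" "\<And>j. j < m \<Longrightarrow> in_simplex d (C j)" "in_cone d m C v"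
    and "t < m" "\<And>j. j < m \<Longrightarrow> util d v (C j) \<le> util d v (C t)"
  shows "util d v v \<le> util d v (C t)"
proof -
  obtain lam where lam_nonneg: "\<And>j. j < m \<Longrightarrow> 0 \<le> lam j"
    and v_eq: "\<And>k. k < d \<Longrightarrow> v k = (\<Sum>j<m. lam j * C j k)"
    using assms(3) unfolding in_cone_def by blast
  have "util d v v = (\<Sum>k<d. v k * (\<Sum>j<m. lam j * C j k))"
    unfolding util_def by (rule sum.cong) (auto simp: v_eq[symmetric])
  also have "\<dots> = (\<Sum>j<m. lam j * util d v (C j))"
    unfolding util_def by (simp add: sum_distrib_left sum.swap[of _ "{..<m}"] algebra_simps)
  also have "\<dots> \<le> (\<Sum>j<m. lam j * util d v (C t))"
    by (intro sum_mono mult_left_mono) (simp_all add: lam_nonneg assms(5))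
  also have "\<dots> = util d v (C t)"
    using cone_weights_sum_eq_one[OF assms(1,2) v_eq] by (simp flip: sum_distrib_right)
  finally show ?thesis .
qed

lemma in_cone_candidate:
  assumes "j < m"
  shows "in_cone d m C (C j)"
  unfolding in_cone_def using assms
  by (intro exI[of _ "\<lambda>i. if i = j then 1 else 0"])
    (simp add: if_distrib[of "\<lambda>x. x * _"] cong: if_cong)

lemma consistent_ranking_hd:
  assumes "consistent_ranking m d C v r" "0 < m"
  shows "hd r < m \<and> (\<forall>j<m. util d v (C j) \<le> util d v (C (hd r)))"
proof -
  have r: "set r = {..<m}" "sorted_wrt (\<lambda>a b. util d v (C b) \<le> util d v (C a)) r"
    using assms(1) unfolding consistent_ranking_def by auto
  then obtain t rest where "r = t # rest" using assms(2) by (cases r) auto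
  with r show ?thesis by auto
qed

lemma consistent_ranking_exists:
  assumes "t < m" "\<And>j. j < m \<Longrightarrow> util d v (C j) \<le> util d v (C t)"
  shows "\<exists>r. consistent_ranking m d C v r \<and> hd r = t"
proof -
  define rest where "rest = sort_key (\<lambda>j. - util d v (C j)) (removeAll t [0..<m])"
  have "sorted_wrt (\<lambda>a b. util d v (C b) \<le> util d v (C a)) rest"
    using sorted_sort_key[of "\<lambda>j. - util d v (C j)" "removeAll t [0..<m]"]
    unfolding rest_def sorted_map by simp
  moreover have "set rest = {..<m} - {t}" "distinct rest"
    unfolding rest_def by (auto simp: distinct_removeAll)
  ultimately have "consistent_ranking m d C v (t # rest)"
    using assms unfolding consistent_ranking_def by auto
  then show ?thesis by (intro exI[of _ "t # rest"]) simp
qed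

lemma plurality_winner_score_ge:
  assumes "plurality_winner n m R w" "\<And>i. i < n \<Longrightarrow> hd (R i) < m"
  shows "n \<le> m * card {i. i < n \<and> hd (R i) = w}"
proof -
  have "{..<n} = (\<Union>j<m. {i. i < n \<and> hd (R i) = j})" using assms(2) by auto
  then have "n = card (\<Union>j<m. {i. i < n \<and> hd (R i) = j})" by (metis card_lessThan)
  also have "\<dots> \<le> (\<Sum>j<m. card {i. i < n \<and> hd (R i) = j})"
    by (rule card_UN_le) simp
  also have "\<dots> \<le> (\<Sum>j<m. card {i. i < n \<and> hd (R i) = w})"
    using assms(1) by (intro sum_mono) (simp add: plurality_winner_def)
  finally show ?thesis by simp
qed

lemma card_div_eq_le:
  assumes "0 < g"
  shows "card {i. i < n \<and> i div g = j} \<le> g"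
proof -
  have "{i. i < n \<and> i div g = j} \<subseteq> (\<lambda>r. j * g + r) ` {..<g}"
  proof
    fix i assume "i \<in> {i. i < n \<and> i div g = j}"
    then have "i = j * g + i mod g" "i mod g < g"
      using assms div_mult_mod_eq[of i g] by auto
    then show "i \<in> (\<lambda>r. j * g + r) ` {..<g}" by blast
  qed
  then have "card {i. i < n \<and> i div g = j} \<le> card ((\<lambda>r. j * g + r) ` {..<g})"
    by (intro card_mono) auto
  also have "\<dots> \<le> g" using card_image_le[of "{..<g}" "\<lambda>r. j * g + r"] by simp
  finally show ?thesis .
qed

lemma plurality_winner_div_groups:
  assumes "0 < g" "g \<le> n" "0 < m" "\<And>i. i < n \<Longrightarrow> hd (R i) = i div g"
  shows "plurality_winner n m R 0"
proof -
  have "{i. i < n \<and> hd (R i) = 0} = {..<g}"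
    using assms by (auto simp: div_eq_0_iff)
  moreover have "{i. i < n \<and> hd (R i) = j} = {i. i < n \<and> i div g = j}" for j
    using assms(4) by auto
  ultimately show ?thesis
    using assms(3) card_div_eq_le[OF assms(1)] unfolding plurality_winner_def by simp
qed

section \<open>Upper bound\<close>

lemma UW_le_voters:
  assumes "\<And>i. i < n \<Longrightarrow> in_simplex d (V i)" "in_simplex d c"
  shows "UW n d V c \<le> real n"
proof -
  have "UW n d V c \<le> (\<Sum>i<n. 1)"
    unfolding UW_def by (intro sum_mono util_le_one assms) simp
  then show ?thesis by simp
qed

lemma UW_ge_supporters:
  assumes valid: "valid_instance n m d V C"
    and rankings: "\<forall>i<n. consistent_ranking m d C (V i) (R i)"
    and "0 < d" "w < m"
  shows "real (card {i. i < n \<and> hd (R i) = w}) / real d \<le> UW n d V (C w)"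
proof -
  let ?S = "{i. i < n \<and> hd (R i) = w}"
  have V: "\<And>i. i < n \<Longrightarrow> in_simplex d (V i)" "\<And>i. i < n \<Longrightarrow> in_cone d m C (V i)"
    and C: "\<And>j. j < m \<Longrightarrow> in_simplex d (C j)"
    using valid unfolding valid_instance_def by auto
  have "real (card ?S) / real d = (\<Sum>i\<in>?S. 1 / real d)" by simp
  also have "\<dots> \<le> (\<Sum>i\<in>?S. util d (V i) (C w))"
  proof (rule sum_mono)
    fix i assume "i \<in> ?S"
    then have i: "i < n" and top: "hd (R i) = w" by auto
    have "\<forall>j<m. util d (V i) (C j) \<le> util d (V i) (C w)"
      using consistent_ranking_hd[of m d C "V i" "R i"] rankings i top \<open>w < m\<close> by auto
    then have "util d (V i) (V i) \<le> util d (V i) (C w)"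
      using util_self_le_top_candidate[OF V(1)[OF i] C V(2)[OF i] \<open>w < m\<close>] by auto
    then show "1 / real d \<le> util d (V i) (C w)"
      using util_self_ge_inverse_dim[OF \<open>0 < d\<close> V(1)[OF i]] by linarith
  qed
  also have "\<dots> \<le> (\<Sum>i<n. util d (V i) (C w))"
    by (rule sum_mono2) (auto intro: util_nonneg V C \<open>w < m\<close>)
  finally show ?thesis unfolding UW_def .
qed

lemma distortion_plurality_le:
  assumes "0 < n" "0 < m" "0 < d"
    and valid: "valid_instance n m d V C"
    and rankings: "\<forall>i<n. consistent_ranking m d C (V i) (R i)"
    and winner: "plurality_winner n m R w"
  shows "distortion_of n m d V C w \<le> real (min m n) * real d"
proof -
  define K where "K = card {i. i < n \<and> hd (R i) = w}"
  have "w < m" using winner by (simp add: plurality_winner_def)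
  have "n \<le> m * K"
    unfolding K_def using plurality_winner_score_ge[OF winner] consistent_ranking_hd
      rankings \<open>0 < m\<close> by blast
  then have "1 \<le> K" using \<open>0 < n\<close> by (cases K) auto
  have welfare_w: "real K / real d \<le> UW n d V (C w)"
    unfolding K_def using UW_ge_supporters[OF valid rankings \<open>0 < d\<close> \<open>w < m\<close>] .
  have "(MAX j\<in>{..<m}. UW n d V (C j)) \<le> real n"
    using valid \<open>0 < m\<close> by (subst Max_le_iff) (auto intro!: UW_le_voters simp: valid_instance_def)
  then have "distortion_of n m d V C w \<le> real n / (real K / real d)"
    unfolding distortion_of_def using \<open>1 \<le> K\<close> \<open>0 < d\<close> welfare_w by (intro frac_le) auto
  also have "\<dots> = real n / real K * real d" by simp
  also have "\<dots> \<le> real (min m n) * real d"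
  proof (intro mult_right_mono)
    have "real n \<le> real m * real K" "real n \<le> real n * real K"
      using \<open>n \<le> m * K\<close> \<open>1 \<le> K\<close>
      by (simp_all add: of_nat_mult[symmetric] del: of_nat_mult)
    then show "real n / real K \<le> real (min m n)"
      using \<open>1 \<le> K\<close> by (simp add: divide_le_eq min_def mult.commute)
  qed simp
  finally show ?thesis .
qed

lemma D_plur_le:
  assumes "0 < n" "0 < m" "0 < d"
  shows "D_plur n m d \<le> ereal (real (min m n) * real d)"
  unfolding D_plur_def using distortion_plurality_le[OF assms] by (auto intro!: SUP_least)

section \<open>Lower bound\<close>

definition ceil_div :: "nat \<Rightarrow> nat \<Rightarrow> nat" where
  "ceil_div n m = (n + m - 1) div m"

lemma ceil_div_bounds:
  assumes "0 < n" "0 < m"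
  shows "1 \<le> ceil_div n m" "ceil_div n m \<le> n"
    "n \<le> ceil_div n m * m" "ceil_div n m * m \<le> n + m - 1"
proof -
  show "n \<le> ceil_div n m * m"
    using dividend_less_div_times[OF \<open>0 < m\<close>, of "n + m - 1"] assms unfolding ceil_div_def by simp
  then show "1 \<le> ceil_div n m" using \<open>0 < n\<close> by (cases "ceil_div n m") auto
  show "ceil_div n m * m \<le> n + m - 1" unfolding ceil_div_def by simp
  moreover have "n + m - 1 < (n + 1) * m"
  proof -
    have "n \<le> n * m" using assms by simp
    then have "n + m - 1 < n * m + m" using assms by linarith
    then show ?thesis by (simp add: algebra_simps)
  qed
  ultimately have "ceil_div n m * m < (n + 1) * m" by linarith
  then show "ceil_div n m \<le> n" by (simp only: mult_less_cancel2) simp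
qed

definition spread_vector :: "nat \<Rightarrow> nat \<Rightarrow> real" where
  "spread_vector d k = (if 0 < k \<and> k < d then 1 / (real d - 1) else 0)"

definition first_unit_vector :: "nat \<Rightarrow> real" where
  "first_unit_vector k = (if k = 0 then 1 else 0)"

definition hard_candidates :: "nat \<Rightarrow> nat \<Rightarrow> nat \<Rightarrow> real" where
  "hard_candidates d j = (if j = 0 then spread_vector d else first_unit_vector)"

definition hard_voters :: "nat \<Rightarrow> nat \<Rightarrow> nat \<Rightarrow> nat \<Rightarrow> nat \<Rightarrow> real" where
  "hard_voters n m d i = hard_candidates d (if i < ceil_div n m then 0 else 1)"

lemma sum_positive_indices_const:
  "(\<Sum>k<d. if 0 < k then c else 0) = real (d - 1) * (c :: real)"
proof -
  have "{..<d} \<inter> {k. 0 < k} = {1..<d}" by auto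
  then show ?thesis by (simp add: sum.If_cases)
qed

lemma in_simplex_hard_candidates:
  assumes "2 \<le> d"
  shows "in_simplex d (hard_candidates d j)"
proof -
  have "(\<Sum>k<d. spread_vector d k) = (\<Sum>k<d. if 0 < k then 1 / (real d - 1) else 0)"
    by (rule sum.cong) (auto simp: spread_vector_def)
  also have "\<dots> = 1" using assms by (simp add: sum_positive_indices_const of_nat_diff)
  finally show ?thesis
    using assms by (auto simp: in_simplex_def hard_candidates_def spread_vector_def first_unit_vector_def)
qed

lemma util_hard_candidates:
  assumes "2 \<le> d"
  shows "util d (hard_candidates d a) (hard_candidates d b) =
    (if a = 0 then (if b = 0 then 1 / (real d - 1) else 0) else (if b = 0 then 0 else 1))"
proof -
  have "(\<Sum>k<d. spread_vector d k * spread_vector d k)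
      = (\<Sum>k<d. if 0 < k then 1 / (real d - 1) / (real d - 1) else 0)"
    by (rule sum.cong) (auto simp: spread_vector_def)
  also have "\<dots> = 1 / (real d - 1)"
    using assms by (simp add: sum_positive_indices_const of_nat_diff)
  finally have "util d (spread_vector d) (spread_vector d) = 1 / (real d - 1)"
    unfolding util_def .
  moreover have "util d (spread_vector d) first_unit_vector = 0"
    "util d first_unit_vector (spread_vector d) = 0"
    unfolding util_def by (auto intro!: sum.neutral simp: spread_vector_def first_unit_vector_def)
  moreover have "util d first_unit_vector first_unit_vector = 1"
    using assms by (simp add: util_def first_unit_vector_def if_distrib cong: if_cong)
  ultimately show ?thesis by (simp add: hard_candidates_def)
qed

lemma hard_instance_valid:
  assumes "2 \<le> d" "2 \<le> m"
  shows "valid_instance n m d (hard_voters n m d) (hard_candidates d)"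
  using assms unfolding valid_instance_def hard_voters_def
  by (simp add: in_simplex_hard_candidates in_cone_candidate)

lemma hard_instance_rankings:
  assumes "2 \<le> d" "0 < m" "0 < n"
  obtains R where "\<forall>i<n. consistent_ranking m d (hard_candidates d) (hard_voters n m d i) (R i)
    \<and> hd (R i) = i div ceil_div n m"
proof -
  let ?g = "ceil_div n m"
  have "\<exists>r. consistent_ranking m d (hard_candidates d) (hard_voters n m d i) r \<and> hd r = i div ?g"
    if "i < n" for i
  proof (rule consistent_ranking_exists)
    show "i div ?g < m"
      using ceil_div_bounds[OF \<open>0 < n\<close> \<open>0 < m\<close>] that
      by (simp add: div_less_iff_less_mult mult.commute)
    have "i div ?g = 0 \<longleftrightarrow> i < ?g"
      using ceil_div_bounds[OF \<open>0 < n\<close> \<open>0 < m\<close>] by (simp add: div_eq_0_iff)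
    then show "util d (hard_voters n m d i) (hard_candidates d j)
        \<le> util d (hard_voters n m d i) (hard_candidates d (i div ?g))" for j
      using assms(1) by (simp add: hard_voters_def util_hard_candidates)
  qed
  then have "\<forall>i. \<exists>r. i < n \<longrightarrow>
      consistent_ranking m d (hard_candidates d) (hard_voters n m d i) r \<and> hd r = i div ?g"
    by blast
  from choice[OF this] show ?thesis using that by blast
qed

lemma UW_hard_instance:
  assumes "2 \<le> d" "0 < m" "0 < n"
  shows "UW n d (hard_voters n m d) (hard_candidates d 0) = real (ceil_div n m) / (real d - 1)"
    and "UW n d (hard_voters n m d) (hard_candidates d 1) = real n - real (ceil_div n m)"
proof -
  let ?g = "ceil_div n m"
  have "?g \<le> n" using ceil_div_bounds[OF \<open>0 < n\<close> \<open>0 < m\<close>] by simp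
  then have "{..<n} \<inter> {i. i < ?g} = {..<?g}" "{..<n} \<inter> - {i. i < ?g} = {?g..<n}" by auto
  then show "UW n d (hard_voters n m d) (hard_candidates d 0) = real ?g / (real d - 1)"
    and "UW n d (hard_voters n m d) (hard_candidates d 1) = real n - real ?g"
    using assms(1) \<open>?g \<le> n\<close>
    by (simp_all add: UW_def hard_voters_def util_hard_candidates sum.If_cases of_nat_diff)
qed

lemma hard_instance_arith:
  fixes N M D G :: real
  assumes "2 \<le> N" "2 \<le> M" "2 \<le> D" "1 \<le> G" "G * M \<le> N + M - 1"
  shows "min M N * D / 16 \<le> (N - G) * (D - 1) / G"
proof -
  have "N * M / 4 \<le> (N - 1) * (M - 1)"
    using mult_mono[of "N / 2" "N - 1" "M / 2" "M - 1"] assms by simp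
  also have "\<dots> \<le> (N - G) * M" using assms by (simp add: algebra_simps)
  finally have "N / 4 \<le> N - G" using assms by (simp add: mult.commute)
  have "G * min M N \<le> 2 * N"
  proof (cases "M \<le> N")
    case False
    then have "G * M < 2 * M" using assms by linarith
    then have "G < 2" using assms by simp
    then show ?thesis using False assms by (simp add: min_def)
  qed (use assms in \<open>simp add: min_def\<close>)
  then have "min M N * D * G \<le> 2 * N * D"
    using mult_right_mono[of "G * min M N" "2 * N" D] assms by (simp add: algebra_simps)
  then have "min M N * D / 16 \<le> (N / 4) * (D / 2) / G"
    using assms by (simp add: field_simps)
  also have "\<dots> \<le> (N - G) * (D - 1) / G"
    using \<open>N / 4 \<le> N - G\<close> assms by (intro divide_right_mono mult_mono) auto
  finally show ?thesis .
qed

lemma distortion_le_D_plur: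
  assumes "valid_instance n m d V C" "\<forall>i<n. consistent_ranking m d C (V i) (R i)"
    and "plurality_winner n m R w"
  shows "ereal (distortion_of n m d V C w) \<le> D_plur n m d"
  unfolding D_plur_def by (rule SUP_upper2[of "(V, C, R, w)"]) (use assms in auto)

lemma D_plur_ge:
  assumes "2 \<le> n" "2 \<le> m" "2 \<le> d"
  shows "ereal (real (min m n) * real d / 16) \<le> D_plur n m d"
proof -
  let ?g = "ceil_div n m" and ?V = "hard_voters n m d" and ?C = "hard_candidates d"
  have n: "0 < n" and m: "0 < m" using assms by auto
  note g = ceil_div_bounds[OF n m]
  obtain R where R: "\<forall>i<n. consistent_ranking m d ?C (?V i) (R i) \<and> hd (R i) = i div ?g"
    using hard_instance_rankings assms(3) n m by blast
  have winner: "plurality_winner n m R 0"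
    using plurality_winner_div_groups[of ?g n m R] g m R by simp
  have "real ?g * real m \<le> real n + real m - 1"
  proof -
    have "?g * m + 1 \<le> n + m" using g(4) m by linarith
    then have "real (?g * m + 1) \<le> real (n + m)" by (simp only: of_nat_le_iff)
    then show ?thesis by simp
  qed
  then have "min (real m) (real n) * real d / 16 \<le> (real n - real ?g) * (real d - 1) / real ?g"
    using assms g by (intro hard_instance_arith) auto
  then have "real (min m n) * real d / 16 \<le> (real n - real ?g) * (real d - 1) / real ?g"
    by (simp only: of_nat_min)
  also have "\<dots> = UW n d ?V (?C 1) / UW n d ?V (?C 0)"
    using UW_hard_instance[OF assms(3) m n] by simp
  also have "\<dots> \<le> distortion_of n m d ?V ?C 0"
  proof -
    have "UW n d ?V (?C 1) \<le> (MAX j\<in>{..<m}. UW n d ?V (?C j))"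
      using assms by (intro Max_ge) auto
    moreover have "0 \<le> UW n d ?V (?C 0)"
      using UW_hard_instance[OF assms(3) m n] assms by simp
    ultimately show ?thesis unfolding distortion_of_def by (rule divide_right_mono)
  qed
  finally have "real (min m n) * real d / 16 \<le> distortion_of n m d ?V ?C 0" .
  moreover have "ereal (distortion_of n m d ?V ?C 0) \<le> D_plur n m d"
    using R winner by (intro distortion_le_D_plur hard_instance_valid assms) auto
  ultimately show ?thesis by (meson ereal_less_eq(3) order_trans)
qed

theorem theorem1:
  shows "\<exists>c1 c2 :: real. 0 < c1 \<and> 0 < c2 \<and>
    (\<forall>n m d. 1 \<le> n \<and> 1 \<le> m \<and> 1 \<le> d \<longrightarrow>
        D_plur n m d \<le> ereal (c2 * real (min m n) * real d)) \<and>
    (\<forall>n m d. 2 \<le> n \<and> 2 \<le> m \<and> 2 \<le> d \<longrightarrow>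
        ereal (c1 * real (min m n) * real d) \<le> D_plur n m d)"
proof (rule exI[of _ "1 / 16"], rule exI[of _ 1], intro conjI allI impI)
  fix n m d :: nat
  assume "1 \<le> n \<and> 1 \<le> m \<and> 1 \<le> d"
  then show "D_plur n m d \<le> ereal (1 * real (min m n) * real d)"
    using D_plur_le[of n m d] by simp
next
  fix n m d :: nat
  assume "2 \<le> n \<and> 2 \<le> m \<and> 2 \<le> d"
  then show "ereal (1 / 16 * real (min m n) * real d) \<le> D_plur n m d"
    using D_plur_ge[of n m d] by simp
qed simp_all

end
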